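(* Let $\mathsf{S} \subseteq \{0,1\}^n$ be arbitrary and $f: \mathsf{S} \rightarrow \{0,1\}$ a partial Boolean function. Let $b \geq 2$ and $\mathsf{IP} : \{0, 1\}^b \times \{0, 1\}^b \to \{0, 1\}$ the Inner Product function. Then $\mathsf{D}_{\mathrm{cc}}^\rightarrow(f \circ \mathsf{IP})=\Omega(b \cdot \mathsf{D}_{\mathrm{dt}}^\rightarrow(f))$, where the implied constant is absolute.
   Context: $\mathsf{IP}(x_1,\dots,x_b,y_1,\dots,y_b)=\oplus_{i\in[b]}(x_i\wedge y_i)$. The composed (partial) function $f\circ\mathsf{IP}$ has Alice holding $x=(x_1,\dots,x_n)$, Bob holding $y=(y_1,\dots,y_n)$, $x_i,y_i\in\{0,1\}^b$, is defined on those $(x,y)$ with $(\mathsf{IP}(x_1,y_1),\dots,\mathsf{IP}(x_n,y_n))\in\mathsf{S}$, and takes value $f(\mathsf{IP}(x_1,y_1),\dots,\mathsf{IP}(x_n,y_n))$. $\mathsf{D}_{\mathrm{cc}}^\rightarrow(F)$ is the deterministic one-way communication complexity: the minimum, over protocols in which Alice sends a message $m(x)$ and Bob outputs a bit depending on $m(x)$ and $y$ that is correct on all inputs in the domain, of the maximum message length. $\mathsf{D}_{\mathrm{dt}}^\rightarrow(f)$ (non-adaptive decision tree complexity) is the minimum $k$ such that there exist indices $i_1,\dots,i_k\in[n]$ for which, for every assignment $a_{i_1},\dots,a_{i_k}$, $f$ is constant on $\mathsf{S}\cap\{x: x_{i_j}=a_{i_j}\ \forall j\}$. *)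

theory Defs
  imports Complex_Main
begin

definition ip :: "bool list \<Rightarrow> bool list \<Rightarrow> bool" where
  "ip u v = odd (length (filter id (map2 (\<and>) u v)))"

definition blocks :: "nat \<Rightarrow> nat \<Rightarrow> bool list list set" where
  "blocks n b = {x. length x = n \<and> (\<forall>u\<in>set x. length u = b)}"

definition comp_dom :: "nat \<Rightarrow> nat \<Rightarrow> bool list set \<Rightarrow> (bool list list \<times> bool list list) set" where
  "comp_dom n b S = {(x, y). x \<in> blocks n b \<and> y \<in> blocks n b \<and> map2 ip x y \<in> S}"

definition oneway_protocol :: "nat \<Rightarrow> nat \<Rightarrow> bool list set \<Rightarrow> (bool list \<Rightarrow> bool) \<Rightarrow> nat \<Rightarrow> bool" where
  "oneway_protocol n b S f k \<longleftrightarrow>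
     (\<exists>(m :: bool list list \<Rightarrow> bool list) (g :: bool list \<Rightarrow> bool list list \<Rightarrow> bool).
        (\<forall>x\<in>blocks n b. length (m x) \<le> k) \<and>
        (\<forall>(x, y)\<in>comp_dom n b S. g (m x) y = f (map2 ip x y)))"

definition D_cc_oneway :: "nat \<Rightarrow> nat \<Rightarrow> bool list set \<Rightarrow> (bool list \<Rightarrow> bool) \<Rightarrow> nat" where
  "D_cc_oneway n b S f = (LEAST k. oneway_protocol n b S f k)"

definition nonadaptive_dt :: "nat \<Rightarrow> bool list set \<Rightarrow> (bool list \<Rightarrow> bool) \<Rightarrow> nat \<Rightarrow> bool" where
  "nonadaptive_dt n S f k \<longleftrightarrow>
     (\<exists>I :: nat list. length I = k \<and> (\<forall>i\<in>set I. i < n) \<and>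
        (\<forall>a :: nat \<Rightarrow> bool. \<exists>c. \<forall>x\<in>S. (\<forall>i\<in>set I. x ! i = a i) \<longrightarrow> f x = c))"

definition D_dt_nonadaptive :: "nat \<Rightarrow> bool list set \<Rightarrow> (bool list \<Rightarrow> bool) \<Rightarrow> nat" where
  "D_dt_nonadaptive n S f = (LEAST k. nonadaptive_dt n S f k)"

end

theory Submission
  imports Defs "HOL-Library.FuncSet"
begin

text \<open>Restrict Alice to inputs all of whose \<open>n\<close> blocks are non-zero, i.e. to words of length \<open>n\<close>
  over an alphabet of \<open>q = 2 ^ b - 1\<close> letters. For non-zero blocks \<open>u \<noteq> u'\<close> the pair
  \<open>(IP(u, y), IP(u', y))\<close> takes all four values, so if two such inputs \<open>v\<close>, \<open>v'\<close> get the same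
  message, Bob's output shows that \<open>f\<close> is determined on \<open>S\<close> by the coordinates where \<open>v\<close> and
  \<open>v'\<close> agree; hence they agree in at least \<open>d = D_dt(f)\<close> coordinates. A family of words any two
  of which agree in \<open>d\<close> coordinates has at most \<open>q ^ n / (q - 1) ^ d\<close> members: compressing it
  to a down-closed family and passing to zero sets gives a \<open>d\<close>-intersecting family of sets, whose
  \<open>1/q\<close>-biased measure is at most \<open>(q - 1) ^ -d\<close> by shifting and Frankl's random walk argument.
  As there are fewer than \<open>2 ^ (k + 1)\<close> messages of length at most \<open>k\<close>, this gives
  \<open>2 ^ ((b - 1) d) \<le> (q - 1) ^ d < 2 ^ (k + 1)\<close>, i.e. \<open>b d \<le> 2 k\<close>.\<close>

section \<open>Biased random walks\<close>

fun reaches_height :: "int \<Rightarrow> bool list \<Rightarrow> bool" where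
  "reaches_height h [] = (h \<le> 0)"
| "reaches_height h (x # xs) = (h \<le> 0 \<or> reaches_height (if x then h - 1 else h + 1) xs)"

lemma reaches_height_nonpos: "h \<le> 0 \<Longrightarrow> reaches_height h xs"
  by (cases xs) auto

definition surplus :: "bool list \<Rightarrow> int" where
  "surplus xs = int (length (filter (\<lambda>b. b) xs)) - int (length (filter Not xs))"

lemma surplus_Nil [simp]: "surplus [] = 0"
  by (simp add: surplus_def)

lemma surplus_Cons [simp]: "surplus (x # xs) = (if x then 1 else -1) + surplus xs"
  by (simp add: surplus_def)

lemma reaches_height_iff_prefix: "reaches_height h xs \<longleftrightarrow> (\<exists>m\<le>length xs. h \<le> surplus (take m xs))"
proof (induction xs arbitrary: h)
  case (Cons x xs)
  have "(\<exists>m\<le>length (x # xs). h \<le> surplus (take m (x # xs))) \<longleftrightarrow>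
      h \<le> 0 \<or> (\<exists>m\<le>length xs. (if x then h - 1 else h + 1) \<le> surplus (take m xs))"
    unfolding less_Suc_eq_le[symmetric] length_Cons Ex_less_Suc2 by (cases x) auto
  then show ?case
    using Cons.IH by simp
qed simp

lemma finite_lists_length_eq_Collect: "finite {xs :: 'a :: finite list. length xs = n \<and> P xs}"
  by (rule finite_subset[OF _ finite_lists_length_eq[of UNIV n]]) auto

lemma sum_lists_length_Suc:
  fixes g :: "bool list \<Rightarrow> 'b :: comm_monoid_add"
  shows "(\<Sum>xs | length xs = Suc n \<and> P xs. g xs) =
    (\<Sum>xs | length xs = n \<and> P (True # xs). g (True # xs)) +
    (\<Sum>xs | length xs = n \<and> P (False # xs). g (False # xs))"
proof -
  have split: "{xs. length xs = Suc n \<and> P xs} =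
    Cons True ` {xs. length xs = n \<and> P (True # xs)} \<union> Cons False ` {xs. length xs = n \<and> P (False # xs)}"
    (is "?L = ?R")
  proof
    show "?L \<subseteq> ?R"
    proof
      fix xs assume "xs \<in> ?L"
      then obtain y ys where "xs = y # ys" "length ys = n" "P (y # ys)"
        by (cases xs) auto
      then show "xs \<in> ?R"
        by (cases y) auto
    qed
  qed auto
  show ?thesis
    unfolding split
    by (subst sum.union_disjoint) (auto simp: sum.reindex finite_lists_length_eq_Collect)
qed

text \<open>A walk taking an up-step with probability \<open>1/(r + 1)\<close> ever climbs to height \<open>h\<close>
  with probability at most \<open>r ^ -h\<close>; cleared of denominators, this reads as follows.\<close>

lemma reaches_height_weight_le:
  fixes r :: nat
  shows "(\<Sum>xs | length xs = n \<and> reaches_height h xs. r ^ length (filter Not xs)) * r ^ nat h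
           \<le> (r + 1) ^ n"
proof (induction n arbitrary: h)
  case 0
  have "{xs. length xs = 0 \<and> reaches_height h xs} = (if h \<le> 0 then {[]} else {})"
    by auto
  then show ?case
    by simp
next
  case (Suc n)
  define T where "T h = (\<Sum>xs | length xs = n \<and> reaches_height h xs. r ^ length (filter Not xs))" for h
  have IH: "T h * r ^ nat h \<le> (r + 1) ^ n" for h
    using Suc.IH unfolding T_def .
  show ?case
  proof (cases "h \<le> 0")
    case True
    have "(\<Sum>xs | length xs = Suc n \<and> reaches_height h xs. r ^ length (filter Not xs)) = (r + 1) * T 0"
      using True unfolding T_def
      by (subst sum_lists_length_Suc) (simp add: reaches_height_nonpos sum_distrib_left sum.distrib)
    then show ?thesis
      using True IH[of 0] by (simp add: add_mono)
  next
    case False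
    have "(\<Sum>xs | length xs = Suc n \<and> reaches_height h xs. r ^ length (filter Not xs))
        = T (h - 1) + r * T (h + 1)"
      using False unfolding T_def
      by (subst sum_lists_length_Suc) (simp add: sum_distrib_left)
    moreover have "nat h = Suc (nat (h - 1))" "nat (h + 1) = Suc (nat h)"
      using False by auto
    ultimately have "(\<Sum>xs | length xs = Suc n \<and> reaches_height h xs. r ^ length (filter Not xs)) * r ^ nat h
        = r * (T (h - 1) * r ^ nat (h - 1)) + T (h + 1) * r ^ nat (h + 1)"
      by (simp add: algebra_simps)
    also have "\<dots> \<le> r * (r + 1) ^ n + (r + 1) ^ n"
      using IH[of "h - 1"] IH[of "h + 1"] by (intro add_mono mult_left_mono) auto
    finally show ?thesis
      by simp
  qed
qed

section \<open>Shifting \<open>t\<close>-intersecting families\<close>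

definition t_intersecting :: "nat \<Rightarrow> nat set set \<Rightarrow> bool" where
  "t_intersecting t F \<longleftrightarrow> (\<forall>A\<in>F. \<forall>B\<in>F. t \<le> card (A \<inter> B))"

text \<open>\<open>biased_weight r n F\<close> is \<open>(r + 1) ^ n\<close> times the measure of \<open>F\<close> under the product
  measure on subsets of \<open>{0..<n}\<close> in which every element is present with probability \<open>1/(r + 1)\<close>.\<close>

definition biased_weight :: "nat \<Rightarrow> nat \<Rightarrow> nat set set \<Rightarrow> nat" where
  "biased_weight r n F = (\<Sum>Z\<in>F. r ^ (n - card Z))"

definition shift :: "nat \<Rightarrow> nat \<Rightarrow> nat set set \<Rightarrow> nat set \<Rightarrow> nat set" where
  "shift i j F Z = (if j \<in> Z \<and> i \<notin> Z \<and> insert i (Z - {j}) \<notin> F then insert i (Z - {j}) else Z)"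

lemma card_exchange_Int:
  assumes "finite A" "i \<notin> A" "j \<in> A"
  shows "card (insert i (A - {j}) \<inter> B) + of_bool (j \<in> B) = card (A \<inter> B) + of_bool (i \<in> B)"
proof -
  have "(A - {j}) \<inter> B = A \<inter> B - {j}"
    by auto
  then have "card ((A - {j}) \<inter> B) + of_bool (j \<in> B) = card (A \<inter> B)"
    using assms card_Suc_Diff1[of "A \<inter> B" j] by (cases "j \<in> B") auto
  moreover have "card (insert i (A - {j}) \<inter> B) = card ((A - {j}) \<inter> B) + of_bool (i \<in> B)"
    using assms by (cases "i \<in> B") auto
  ultimately show ?thesis
    by simp
qed

lemma t_le_card_Int_shift_unshifted:
  assumes F: "t_intersecting t F" "\<forall>Z\<in>F. finite Z" and A: "A \<in> F"
    and B: "B \<in> F" "shift i j F B = B"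
  shows "t \<le> card (shift i j F A \<inter> B)"
proof (cases "j \<in> A \<and> i \<notin> A \<and> insert i (A - {j}) \<notin> F")
  case True
  have "t \<le> card (A \<inter> B)"
    using F A B unfolding t_intersecting_def by blast
  moreover have exA: "card (insert i (A - {j}) \<inter> B) + of_bool (j \<in> B) = card (A \<inter> B) + of_bool (i \<in> B)"
    using True F A by (intro card_exchange_Int) auto
  moreover have "t \<le> card (insert i (A - {j}) \<inter> B)" if "j \<in> B" "i \<notin> B"
  proof -
    \<comment> \<open>Here \<open>B\<close> was not moved only because its shift already lies in \<open>F\<close>.\<close>
    have B': "insert i (B - {j}) \<in> F"
      using B that unfolding shift_def by (auto split: if_splits)
    have "card (insert i (B - {j}) \<inter> A) + 1 = card (B \<inter> A)"
      using card_exchange_Int[of B i j A] F B that True by auto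
    then have "card (insert i (A - {j}) \<inter> B) = card (A \<inter> insert i (B - {j}))"
      using exA that by (simp add: Int_commute)
    then show ?thesis
      using F A B' unfolding t_intersecting_def by auto
  qed
  ultimately show ?thesis
    using True unfolding shift_def by (cases "j \<in> B"; cases "i \<in> B") auto
next
  case False
  then show ?thesis
    using F A B unfolding t_intersecting_def shift_def by auto
qed

lemma card_Int_shift_both:
  assumes "finite A" "finite B" "j \<in> A" "i \<notin> A" "j \<in> B" "i \<notin> B"
  shows "card (insert i (A - {j}) \<inter> insert i (B - {j})) = card (A \<inter> B)"
proof -
  have "insert i (A - {j}) \<inter> insert i (B - {j}) = insert i (A \<inter> B - {j})"
    by auto
  then show ?thesis
    using assms card_Suc_Diff1[of "A \<inter> B" j] by auto
qed

lemma t_intersecting_shift: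
  assumes "t_intersecting t F" "\<forall>Z\<in>F. finite Z"
  shows "t_intersecting t (shift i j F ` F)"
proof -
  have "t \<le> card (shift i j F A \<inter> shift i j F B)" if A: "A \<in> F" and B: "B \<in> F" for A B
  proof -
    have "shift i j F B = B \<or> shift i j F A = A \<or>
        (j \<in> A \<and> i \<notin> A \<and> j \<in> B \<and> i \<notin> B \<and>
         shift i j F A = insert i (A - {j}) \<and> shift i j F B = insert i (B - {j}))"
      unfolding shift_def by auto
    then consider "shift i j F B = B" | "shift i j F A = A"
      | "j \<in> A" "i \<notin> A" "j \<in> B" "i \<notin> B"
        "shift i j F A = insert i (A - {j})" "shift i j F B = insert i (B - {j})"
      by blast
    then show ?thesis
    proof cases
      case 1
      then show ?thesis
        using t_le_card_Int_shift_unshifted[OF assms A B] by simp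
    next
      case 2
      then show ?thesis
        using t_le_card_Int_shift_unshifted[OF assms B A] by (simp add: Int_commute)
    next
      case 3
      then show ?thesis
        using assms A B card_Int_shift_both[of A B j i] unfolding t_intersecting_def by auto
    qed
  qed
  then show ?thesis
    unfolding t_intersecting_def by blast
qed

lemma shift_in_family: "shift i j F Z \<in> F \<Longrightarrow> shift i j F Z = Z"
  unfolding shift_def by (auto split: if_splits)

lemma inj_on_shift: "inj_on (shift i j F) F"
proof (rule inj_onI)
  fix A B assume AB: "A \<in> F" "B \<in> F" "shift i j F A = shift i j F B"
  show "A = B"
  proof (cases "shift i j F A \<in> F")
    case True
    then show ?thesis
      using AB(3) shift_in_family by metis
  next
    case False
    have moved: "j \<in> X \<and> i \<notin> X \<and> shift i j F X = insert i (X - {j})"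
      if "X \<in> F" "shift i j F X \<notin> F" for X
      using that unfolding shift_def by (cases "j \<in> X \<and> i \<notin> X \<and> insert i (X - {j}) \<notin> F") auto
    have A: "j \<in> A" "i \<notin> A" and B: "j \<in> B" "i \<notin> B"
      and "insert i (A - {j}) = insert i (B - {j})"
      using moved[OF AB(1) False] moved[OF AB(2)] False AB(3) by auto
    then have "A - {j} = B - {j}"
      by (metis Diff_insert_absorb Diff_iff)
    then show ?thesis
      using A(1) B(1) by (metis insert_Diff)
  qed
qed

lemma card_shift:
  assumes "finite Z"
  shows "card (shift i j F Z) = card Z"
proof (cases "j \<in> Z \<and> i \<notin> Z \<and> insert i (Z - {j}) \<notin> F")
  case True
  then show ?thesis
    using assms card_Suc_Diff1[of Z j] unfolding shift_def by simp
next
  case False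
  then show ?thesis
    by (simp only: shift_def if_not_P[OF False] if_False)
qed

definition up_closed :: "nat \<Rightarrow> nat set set \<Rightarrow> bool" where
  "up_closed n F \<longleftrightarrow> (\<forall>Z\<in>F. \<forall>Y. Z \<subseteq> Y \<and> Y \<subseteq> {0..<n} \<longrightarrow> Y \<in> F)"

definition shifted :: "nat set set \<Rightarrow> bool" where
  "shifted F \<longleftrightarrow> (\<forall>Z\<in>F. \<forall>i j. j \<in> Z \<and> i < j \<and> i \<notin> Z \<longrightarrow> insert i (Z - {j}) \<in> F)"

definition index_sum :: "nat set set \<Rightarrow> nat" where
  "index_sum F = (\<Sum>Z\<in>F. \<Sum>Z)"

lemma biased_weight_shift:
  "\<forall>Z\<in>F. finite Z \<Longrightarrow> biased_weight r n (shift i j F ` F) = biased_weight r n F"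
  unfolding biased_weight_def by (simp add: sum.reindex[OF inj_on_shift] card_shift)

lemma sum_shift_le: "finite Z \<Longrightarrow> i < j \<Longrightarrow> \<Sum>(shift i j F Z) \<le> \<Sum>Z"
  unfolding shift_def by (auto simp: sum.remove[of Z j id, simplified])

lemma index_sum_shift_less:
  assumes "finite F" "\<forall>Z\<in>F. finite Z" "i < j" "Z \<in> F" "j \<in> Z" "i \<notin> Z" "insert i (Z - {j}) \<notin> F"
  shows "index_sum (shift i j F ` F) < index_sum F"
proof -
  have "index_sum (shift i j F ` F) = (\<Sum>Z\<in>F. \<Sum>(shift i j F Z))"
    unfolding index_sum_def by (simp add: sum.reindex[OF inj_on_shift])
  also have "\<dots> < index_sum F"
    unfolding index_sum_def
  proof (rule sum_strict_mono_ex1)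
    show "\<forall>Y\<in>F. \<Sum>(shift i j F Y) \<le> \<Sum>Y"
      using assms sum_shift_le by blast
    show "\<exists>Y\<in>F. \<Sum>(shift i j F Y) < \<Sum>Y"
      using assms by (intro bexI[of _ Z]) (auto simp: shift_def sum.remove[of Z j id, simplified])
  qed (use assms in auto)
  finally show ?thesis .
qed

lemma t_intersecting_insert_superset:
  assumes "t_intersecting t F" "Z \<in> F" "Z \<subseteq> Y" "finite Y"
  shows "t_intersecting t (insert Y F)"
proof -
  have YB: "t \<le> card (Y \<inter> B)" if "B \<in> F" for B
  proof -
    have "t \<le> card (Z \<inter> B)"
      using assms that unfolding t_intersecting_def by auto
    also have "\<dots> \<le> card (Y \<inter> B)"
      using assms by (intro card_mono) auto
    finally show ?thesis .
  qed
  moreover have "t \<le> card (Y \<inter> Y)"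
    using YB[OF assms(2)] card_mono[of "Y \<inter> Y" "Y \<inter> Z"] assms(4) by auto
  ultimately show ?thesis
    using assms unfolding t_intersecting_def by (auto simp: Int_commute)
qed

lemma up_closed_if_biased_weight_maximal:
  assumes F: "F \<subseteq> Pow {0..<n}" "t_intersecting t F" and r: "0 < r"
    and maximal: "\<And>G. G \<subseteq> Pow {0..<n} \<Longrightarrow> t_intersecting t G \<Longrightarrow> biased_weight r n G \<le> biased_weight r n F"
  shows "up_closed n F"
  unfolding up_closed_def
proof (intro ballI allI impI)
  fix Z Y assume ZY: "Z \<in> F" "Z \<subseteq> Y \<and> Y \<subseteq> {0..<n}"
  show "Y \<in> F"
  proof (rule ccontr)
    assume "Y \<notin> F"
    moreover have "finite F"
      using F(1) by (rule finite_subset) auto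
    ultimately have "biased_weight r n (insert Y F) = r ^ (n - card Y) + biased_weight r n F"
      unfolding biased_weight_def by simp
    moreover have "t_intersecting t (insert Y F)"
      using ZY t_intersecting_insert_superset[OF F(2), of Z Y] finite_subset[of Y "{0..<n}"] by auto
    ultimately show False
      using maximal[of "insert Y F"] F(1) ZY r by fastforce
  qed
qed

lemma shifted_if_index_sum_minimal:
  assumes F: "F \<subseteq> Pow {0..<n}" "t_intersecting t F"
    and minimal: "\<And>G. G \<subseteq> Pow {0..<n} \<Longrightarrow> t_intersecting t G \<Longrightarrow>
      biased_weight r n G = biased_weight r n F \<Longrightarrow> index_sum F \<le> index_sum G"
  shows "shifted F"
  unfolding shifted_def
proof (intro ballI allI impI)
  fix Z i j assume Z: "Z \<in> F" and ij: "j \<in> Z \<and> i < j \<and> i \<notin> Z"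
  have finite_members: "\<forall>Z\<in>F. finite Z"
    using F(1) by (auto intro: finite_subset)
  show "insert i (Z - {j}) \<in> F"
  proof (rule ccontr)
    assume "insert i (Z - {j}) \<notin> F"
    moreover have "finite F"
      using F(1) by (rule finite_subset) auto
    ultimately have "index_sum (shift i j F ` F) < index_sum F"
      using index_sum_shift_less[OF _ finite_members _ Z] ij by auto
    moreover have "shift i j F Y \<subseteq> {0..<n}" if "Y \<in> F" for Y
    proof -
      have "Y \<subseteq> {0..<n}"
        using that F(1) by auto
      then show ?thesis
        using ij unfolding shift_def by auto
    qed
    then have "index_sum F \<le> index_sum (shift i j F ` F)"
      using t_intersecting_shift[OF F(2) finite_members] biased_weight_shift[OF finite_members]
      by (intro minimal) auto
    ultimately show False
      by simp
  qed
qed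

lemma exists_up_closed_shifted:
  assumes F0: "F0 \<subseteq> Pow {0..<n}" "t_intersecting t F0" and r: "0 < r"
  obtains F where "F \<subseteq> Pow {0..<n}" "t_intersecting t F" "biased_weight r n F0 \<le> biased_weight r n F"
    "up_closed n F" "shifted F"
proof -
  define C where "C = {F. F \<subseteq> Pow {0..<n} \<and> t_intersecting t F}"
  have "finite C"
    unfolding C_def by (rule finite_subset[of _ "Pow (Pow {0..<n})"]) auto
  have "F0 \<in> C"
    using F0 unfolding C_def by auto
  then have "Max (biased_weight r n ` C) \<in> biased_weight r n ` C"
    using \<open>finite C\<close> by (intro Max_in) auto
  then obtain F1 where "F1 \<in> C" and F1_weight: "biased_weight r n F1 = Max (biased_weight r n ` C)"
    by auto
  have F1_max: "biased_weight r n G \<le> biased_weight r n F1" if "G \<in> C" for G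
    unfolding F1_weight using \<open>finite C\<close> that by (intro Max_ge) auto
  define C' where "C' = {G \<in> C. biased_weight r n G = biased_weight r n F1}"
  have "F1 \<in> C'"
    unfolding C'_def using \<open>F1 \<in> C\<close> by simp
  then obtain F where "F \<in> C'" and F_min: "\<And>G. G \<in> C' \<Longrightarrow> index_sum F \<le> index_sum G"
    using ex_has_least_nat[of "\<lambda>G. G \<in> C'" F1 index_sum] by blast
  then have F: "F \<subseteq> Pow {0..<n}" "t_intersecting t F" "biased_weight r n F = biased_weight r n F1"
    unfolding C'_def C_def by auto
  have "up_closed n F"
    using F r F1_max by (intro up_closed_if_biased_weight_maximal) (auto simp: C_def)
  moreover have "shifted F"
    using F F_min by (intro shifted_if_index_sum_minimal[of F n t r]) (auto simp: C'_def C_def)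
  ultimately show ?thesis
    using that F F1_max[OF \<open>F0 \<in> C\<close>] by simp
qed

definition prefix_dominated :: "nat set \<Rightarrow> nat set \<Rightarrow> bool" where
  "prefix_dominated Z B \<longleftrightarrow> (\<forall>m. card (Z \<inter> {..<m}) \<le> card (B \<inter> {..<m}))"

lemma prefix_dominated_exchange_below:
  assumes Z: "finite Z" "j \<in> Z" "i \<notin> Z" and B: "i \<in> B" "i < j" "Z \<inter> {..<j} \<subseteq> B"
    and dom: "prefix_dominated Z B"
  shows "prefix_dominated (insert i (Z - {j})) B"
  unfolding prefix_dominated_def
proof
  fix m
  show "card (insert i (Z - {j}) \<inter> {..<m}) \<le> card (B \<inter> {..<m})"
  proof (cases "m \<le> j")
    case True
    then have "insert i (Z - {j}) \<inter> {..<m} \<subseteq> B \<inter> {..<m}"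
      using B by auto
    then show ?thesis
      by (intro card_mono) auto
  next
    case False
    have "card (insert i (Z - {j}) \<inter> {..<m}) + of_bool (j \<in> {..<m})
        = card (Z \<inter> {..<m}) + of_bool (i \<in> {..<m})"
      using Z by (intro card_exchange_Int) auto
    then have "card (insert i (Z - {j}) \<inter> {..<m}) = card (Z \<inter> {..<m})"
      using False B by simp
    then show ?thesis
      using dom unfolding prefix_dominated_def by simp
  qed
qed

lemma prefix_dominated_exchange:
  assumes Z: "finite Z" and dom: "prefix_dominated Z B" and ne: "Z - B \<noteq> {}"
  obtains i j where "j \<in> Z - B" "i \<in> B - Z" "i < j" "prefix_dominated (insert i (Z - {j})) B"
proof -
  define j where "j = Min (Z - B)"
  have j: "j \<in> Z - B"
    unfolding j_def using ne Z by (intro Min_in) auto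
  have below_j: "Z \<inter> {..<j} \<subseteq> B"
  proof
    fix z assume z: "z \<in> Z \<inter> {..<j}"
    show "z \<in> B"
    proof (rule ccontr)
      assume "z \<notin> B"
      then have "j \<le> z"
        unfolding j_def using Z z by (intro Min_le) auto
      then show False
        using z by simp
    qed
  qed
  have "card (Z \<inter> {..<Suc j}) \<le> card (B \<inter> {..<Suc j})"
    using dom unfolding prefix_dominated_def by blast
  moreover have "Z \<inter> {..<Suc j} = insert j (Z \<inter> {..<j})" "B \<inter> {..<Suc j} = B \<inter> {..<j}"
    using j by (auto simp: less_Suc_eq)
  ultimately have "card (Z \<inter> {..<j}) < card (B \<inter> {..<j})"
    using Z by simp
  then have "\<not> B \<inter> {..<j} \<subseteq> Z \<inter> {..<j}"
    using card_mono[of "Z \<inter> {..<j}" "B \<inter> {..<j}"] by auto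
  then obtain i where i: "i \<in> B" "i < j" "i \<notin> Z"
    by auto
  then show ?thesis
    using that j Z dom below_j prefix_dominated_exchange_below by blast
qed

lemma up_closed_shifted_mem_if_dominated:
  assumes up: "up_closed n F" and sh: "shifted F" and FP: "F \<subseteq> Pow {0..<n}"
    and B: "B \<subseteq> {0..<n}" and Z: "Z \<in> F" "prefix_dominated Z B"
  shows "B \<in> F"
  using Z
proof (induction "card (Z - B)" arbitrary: Z)
  case 0
  have "finite Z"
    using 0 FP by (meson PowD finite_atLeastLessThan finite_subset subsetD)
  then have "Z \<subseteq> B"
    using 0 by (metis card_eq_0_iff Diff_eq_empty_iff finite_Diff)
  then show ?case
    using up B \<open>Z \<in> F\<close> unfolding up_closed_def by blast
next
  case (Suc k)
  have finite_Z: "finite Z"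
    using Suc.prems FP by (auto intro: finite_subset)
  moreover have "Z - B \<noteq> {}"
    using Suc.hyps(2) by (metis card.empty nat.distinct(1))
  ultimately obtain i j where ij: "j \<in> Z - B" "i \<in> B - Z" "i < j"
    and dom: "prefix_dominated (insert i (Z - {j})) B"
    using prefix_dominated_exchange Suc.prems(2) by blast
  have "insert i (Z - {j}) \<in> F"
    using sh Suc.prems(1) ij unfolding shifted_def by blast
  moreover have "insert i (Z - {j}) - B = (Z - B) - {j}"
    using ij by auto
  then have "k = card (insert i (Z - {j}) - B)"
    using Suc.hyps(2) ij finite_Z by simp
  ultimately show ?case
    using Suc.hyps(1) dom by blast
qed

lemma exists_prefix_card_eq:
  fixes Z :: "nat set"
  assumes "k \<le> card (Z \<inter> {..<n})"
  shows "\<exists>p\<le>n. card (Z \<inter> {..<p}) = k"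
  using assms
proof (induction n)
  case 0
  then show ?case by simp
next
  case (Suc n)
  show ?case
  proof (cases "k \<le> card (Z \<inter> {..<n})")
    case True
    then show ?thesis
      using Suc.IH le_Suc_eq by blast
  next
    case False
    moreover have "Z \<inter> {..<Suc n} \<subseteq> insert n (Z \<inter> {..<n})"
      by auto
    then have "card (Z \<inter> {..<Suc n}) \<le> Suc (card (Z \<inter> {..<n}))"
      using card_mono[of "insert n (Z \<inter> {..<n})"] by (simp add: card_insert_if split: if_splits)
    ultimately show ?thesis
      using Suc.prems by (intro exI[of _ "Suc n"]) simp
  qed
qed

lemma prefix_dominated_prefix_Un_complement:
  assumes Z: "Z \<subseteq> {0..<n}" and p: "p \<le> n"
    and bounded: "\<And>m. m \<le> n \<Longrightarrow> card (Z \<inter> {..<m}) \<le> card (Z \<inter> {..<p}) + card ({..<m} - Z)"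
  shows "prefix_dominated Z ((Z \<inter> {..<p}) \<union> ({0..<n} - Z))"
  unfolding prefix_dominated_def
proof
  fix m
  define B where "B = (Z \<inter> {..<p}) \<union> ({0..<n} - Z)"
  show "card (Z \<inter> {..<m}) \<le> card (B \<inter> {..<m})"
  proof (cases "m \<le> p")
    case True
    then have "Z \<inter> {..<m} \<subseteq> B \<inter> {..<m}"
      unfolding B_def by auto
    then show ?thesis
      by (intro card_mono) auto
  next
    case False
    define m' where "m' = min m n"
    have restrict: "Z \<inter> {..<m} = Z \<inter> {..<m'}" "B \<inter> {..<m} = B \<inter> {..<m'}"
      unfolding m'_def B_def using Z by auto
    have "(Z \<inter> {..<p}) \<union> ({..<m'} - Z) \<subseteq> B \<inter> {..<m'}"
      unfolding B_def m'_def using False p by auto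
    then have "card ((Z \<inter> {..<p}) \<union> ({..<m'} - Z)) \<le> card (B \<inter> {..<m'})"
      by (intro card_mono) auto
    then have "card (Z \<inter> {..<p}) + card ({..<m'} - Z) \<le> card (B \<inter> {..<m'})"
      by (subst (asm) card_Un_disjoint) auto
    then have "card (Z \<inter> {..<m'}) \<le> card (B \<inter> {..<m'})"
      using bounded[of m'] m'_def by linarith
    then show ?thesis
      by (simp only: restrict)
  qed
qed

text \<open>Frankl's lemma: along every member \<open>Z\<close> of a shifted, up-closed \<open>t\<close>-intersecting family,
  some prefix contains at least \<open>t\<close> more elements than non-elements. Otherwise, with \<open>p\<close> the point
  where \<open>Z\<close> has collected \<open>t - 1\<close> elements, the set consisting of these and of all non-elements
  of \<open>Z\<close> dominates \<open>Z\<close>, hence belongs to the family, but meets \<open>Z\<close> in only \<open>t - 1\<close> points.\<close>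

lemma shifted_member_prefix_surplus:
  assumes FP: "F \<subseteq> Pow {0..<n}" and Ft: "t_intersecting t F" and up: "up_closed n F"
    and sh: "shifted F" and Z: "Z \<in> F"
  shows "\<exists>m\<le>n. int t \<le> int (card (Z \<inter> {..<m})) - int (card ({..<m} - Z))"
proof (rule ccontr)
  assume no_surplus: "\<not> ?thesis"
  have "t \<noteq> 0"
  proof
    assume "t = 0"
    then have "\<exists>m\<le>n. int t \<le> int (card (Z \<inter> {..<m})) - int (card ({..<m} - Z))"
      by (intro exI[of _ 0]) simp
    then show False
      using no_surplus by blast
  qed
  have ZP: "Z \<subseteq> {0..<n}"
    using Z FP by auto
  then have "Z \<inter> {..<n} = Z"
    by auto
  moreover have "t \<le> card Z"
    using Ft Z unfolding t_intersecting_def by (metis Int_absorb)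
  ultimately have "t - 1 \<le> card (Z \<inter> {..<n})"
    by simp
  then obtain p where p: "p \<le> n" "card (Z \<inter> {..<p}) = t - 1"
    using exists_prefix_card_eq by blast
  define B where "B = (Z \<inter> {..<p}) \<union> ({0..<n} - Z)"
  have "card (Z \<inter> {..<m}) \<le> card (Z \<inter> {..<p}) + card ({..<m} - Z)" if "m \<le> n" for m
    using no_surplus that p(2) by fastforce
  then have "prefix_dominated Z B"
    unfolding B_def by (rule prefix_dominated_prefix_Un_complement[OF ZP p(1)])
  moreover have "B \<subseteq> {0..<n}"
    unfolding B_def using ZP p by auto
  ultimately have "B \<in> F"
    using up_closed_shifted_mem_if_dominated[OF up sh FP _ Z] by blast
  then have "t \<le> card (Z \<inter> B)"
    using Ft Z unfolding t_intersecting_def by blast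
  moreover have "Z \<inter> B = Z \<inter> {..<p}"
    unfolding B_def by auto
  ultimately show False
    using p \<open>t \<noteq> 0\<close> by simp
qed

definition char_list :: "nat \<Rightarrow> nat set \<Rightarrow> bool list" where
  "char_list n Z = map (\<lambda>i. i \<in> Z) [0..<n]"

lemma length_char_list [simp]: "length (char_list n Z) = n"
  by (simp add: char_list_def)

lemma length_filter_take_char_list:
  assumes "m \<le> n"
  shows "length (filter (\<lambda>b. b) (take m (char_list n Z))) = card (Z \<inter> {..<m})"
    and "length (filter Not (take m (char_list n Z))) = card ({..<m} - Z)"
proof -
  have take: "take m (char_list n Z) = map (\<lambda>i. i \<in> Z) [0..<m]"
    using assms by (simp add: char_list_def take_map min_def)
  have "{i. i < m \<and> i \<in> Z} = Z \<inter> {..<m}" "{i. i < m \<and> i \<notin> Z} = {..<m} - Z"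
    by auto
  then show "length (filter (\<lambda>b. b) (take m (char_list n Z))) = card (Z \<inter> {..<m})"
    and "length (filter Not (take m (char_list n Z))) = card ({..<m} - Z)"
    unfolding take by (simp_all add: filter_map comp_def length_filter_conv_card cong: conj_cong)
qed

lemma inj_on_char_list: "inj_on (char_list n) (Pow {0..<n})"
proof (rule inj_onI)
  fix X Y assume XY: "X \<in> Pow {0..<n}" "Y \<in> Pow {0..<n}" "char_list n X = char_list n Y"
  have "(i \<in> X) = (i \<in> Y)" if "i < n" for i
    using arg_cong[OF XY(3), of "\<lambda>xs. xs ! i"] that by (simp add: char_list_def)
  then show "X = Y"
    using XY(1,2) by auto
qed

lemma biased_weight_t_intersecting_le:
  assumes F: "F \<subseteq> Pow {0..<n}" "t_intersecting t F" and r: "0 < r"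
  shows "biased_weight r n F * r ^ t \<le> (r + 1) ^ n"
proof -
  obtain G where G: "G \<subseteq> Pow {0..<n}" "t_intersecting t G" "biased_weight r n F \<le> biased_weight r n G"
    "up_closed n G" "shifted G"
    using exists_up_closed_shifted[OF F r] by blast
  have reaches: "reaches_height (int t) (char_list n Z)" if "Z \<in> G" for Z
    using shifted_member_prefix_surplus[OF G(1,2,4,5) that]
    by (auto simp: reaches_height_iff_prefix surplus_def length_filter_take_char_list)
  have down_steps: "length (filter Not (char_list n Z)) = n - card Z" if "Z \<in> G" for Z
  proof -
    have "Z \<subseteq> {0..<n}"
      using that G(1) by auto
    then show ?thesis
      using length_filter_take_char_list(2)[of n n Z]
      by (simp add: card_Diff_subset finite_subset lessThan_atLeast0)
  qed
  have inj: "inj_on (char_list n) G"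
    using inj_on_char_list G(1) by (rule inj_on_subset)
  have "biased_weight r n G = (\<Sum>xs\<in>char_list n ` G. r ^ length (filter Not xs))"
    unfolding biased_weight_def using inj down_steps by (simp add: sum.reindex)
  also have "\<dots> \<le> (\<Sum>xs | length xs = n \<and> reaches_height (int t) xs. r ^ length (filter Not xs))"
    using reaches by (intro sum_mono2 finite_lists_length_eq_Collect) auto
  finally have "biased_weight r n F * r ^ t
      \<le> (\<Sum>xs | length xs = n \<and> reaches_height (int t) xs. r ^ length (filter Not xs)) * r ^ t"
    using G(3) by (intro mult_le_mono1) simp
  also have "\<dots> \<le> (r + 1) ^ n"
    using reaches_height_weight_le[of r n "int t"] by simp
  finally show ?thesis .
qed

section \<open>Families of words with many agreements\<close>

definition agreement :: "nat \<Rightarrow> (nat \<Rightarrow> 'a) \<Rightarrow> (nat \<Rightarrow> 'a) \<Rightarrow> nat" where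
  "agreement n x y = card {j. j < n \<and> x j = y j}"

definition t_agreeing :: "nat \<Rightarrow> nat \<Rightarrow> (nat \<Rightarrow> 'a) set \<Rightarrow> bool" where
  "t_agreeing n t M \<longleftrightarrow> (\<forall>x\<in>M. \<forall>y\<in>M. t \<le> agreement n x y)"

definition compress :: "nat \<Rightarrow> 'a \<Rightarrow> 'a \<Rightarrow> (nat \<Rightarrow> 'a) set \<Rightarrow> (nat \<Rightarrow> 'a) \<Rightarrow> nat \<Rightarrow> 'a" where
  "compress i a z M x = (if x i = a \<and> x(i := z) \<notin> M then x(i := z) else x)"

lemma agreement_commute: "agreement n x y = agreement n y x"
  unfolding agreement_def by (metis (no_types, lifting))

lemma agreement_fun_upd:
  assumes "i < n"
  shows "agreement n (x(i := c)) y + of_bool (x i = y i) = agreement n x y + of_bool (c = y i)"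
proof -
  have split: "agreement n u y = card {j. j < n \<and> j \<noteq> i \<and> u j = y j} + of_bool (u i = y i)" for u
  proof -
    have "{j. j < n \<and> u j = y j} =
        (if u i = y i then insert i {j. j < n \<and> j \<noteq> i \<and> u j = y j} else {j. j < n \<and> j \<noteq> i \<and> u j = y j})"
      using assms by auto
    then show ?thesis
      unfolding agreement_def by simp
  qed
  have "{j. j < n \<and> j \<noteq> i \<and> (x(i := c)) j = y j} = {j. j < n \<and> j \<noteq> i \<and> x j = y j}"
    by auto
  then show ?thesis
    unfolding split[of "x(i := c)"] split[of x] by simp
qed

lemma t_le_agreement_compress_uncompressed:
  assumes M: "t_agreeing n t M" and i: "i < n" and x: "x \<in> M"
    and y: "y \<in> M" "compress i a z M y = y"
  shows "t \<le> agreement n (compress i a z M x) y"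
proof (cases "x i = a \<and> x(i := z) \<notin> M")
  case True
  then have "z \<noteq> a"
    using x by (metis fun_upd_triv)
  have "t \<le> agreement n x y"
    using M x y unfolding t_agreeing_def by blast
  moreover have exx: "agreement n (x(i := z)) y + of_bool (a = y i) = agreement n x y + of_bool (z = y i)"
    using agreement_fun_upd[OF i, of x z y] True by simp
  moreover have "t \<le> agreement n (x(i := z)) y" if "y i = a"
  proof -
    \<comment> \<open>Here \<open>y\<close> was not moved only because its compression already lies in \<open>M\<close>.\<close>
    have y': "y(i := z) \<in> M"
      using y that unfolding compress_def by (metis fun_upd_triv)
    have "agreement n (y(i := z)) x + 1 = agreement n y x"
      using agreement_fun_upd[OF i, of y z x] True that \<open>z \<noteq> a\<close> by simp
    then have "agreement n (x(i := z)) y = agreement n x (y(i := z))"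
      using exx that \<open>z \<noteq> a\<close> by (simp add: agreement_commute)
    then show ?thesis
      using M x y' unfolding t_agreeing_def by auto
  qed
  ultimately show ?thesis
    using True \<open>z \<noteq> a\<close> unfolding compress_def by (cases "y i = a"; cases "y i = z") auto
next
  case False
  then show ?thesis
    using M x y unfolding t_agreeing_def compress_def by auto
qed

lemma t_agreeing_compress:
  assumes M: "t_agreeing n t M" and i: "i < n"
  shows "t_agreeing n t (compress i a z M ` M)"
proof -
  have "t \<le> agreement n (compress i a z M x) (compress i a z M y)" if x: "x \<in> M" and y: "y \<in> M" for x y
  proof -
    have "compress i a z M y = y \<or> compress i a z M x = x \<or>
        (x i = a \<and> y i = a \<and> x(i := z) \<notin> M \<and>
         compress i a z M x = x(i := z) \<and> compress i a z M y = y(i := z))"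
      unfolding compress_def by auto
    then consider "compress i a z M y = y" | "compress i a z M x = x"
      | "x i = a" "y i = a" "x(i := z) \<notin> M" "compress i a z M x = x(i := z)" "compress i a z M y = y(i := z)"
      by blast
    then show ?thesis
    proof cases
      case 1
      then show ?thesis
        using t_le_agreement_compress_uncompressed[OF M i x y] by simp
    next
      case 2
      then show ?thesis
        using t_le_agreement_compress_uncompressed[OF M i y x] by (simp add: agreement_commute)
    next
      case 3
      then have "z \<noteq> a"
        using x by (metis fun_upd_triv)
      have "agreement n (x(i := z)) (y(i := z)) = agreement n x (y(i := z)) + 1"
        using agreement_fun_upd[OF i, of x z "y(i := z)"] 3 \<open>z \<noteq> a\<close> by simp
      moreover have "agreement n (y(i := z)) x + 1 = agreement n y x"
        using agreement_fun_upd[OF i, of y z x] 3 \<open>z \<noteq> a\<close> by simp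
      ultimately show ?thesis
        using 3 M x y unfolding t_agreeing_def by (simp add: agreement_commute)
    qed
  qed
  then show ?thesis
    unfolding t_agreeing_def by blast
qed

lemma inj_on_compress: "inj_on (compress i a z M) M"
proof (rule inj_onI)
  fix x y assume xy: "x \<in> M" "y \<in> M" "compress i a z M x = compress i a z M y"
  show "x = y"
  proof (cases "x i = a \<and> x(i := z) \<notin> M"; cases "y i = a \<and> y(i := z) \<notin> M")
    assume "x i = a \<and> x(i := z) \<notin> M" "y i = a \<and> y(i := z) \<notin> M"
    then show ?thesis
      using xy(3) unfolding compress_def by (metis fun_upd_triv fun_upd_upd)
  qed (use xy in \<open>auto simp: compress_def\<close>)
qed

definition down_closed :: "nat \<Rightarrow> 'a \<Rightarrow> (nat \<Rightarrow> 'a) set \<Rightarrow> bool" where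
  "down_closed n z M \<longleftrightarrow> (\<forall>x\<in>M. \<forall>i<n. x(i := z) \<in> M)"

definition nonzero_count :: "nat \<Rightarrow> 'a \<Rightarrow> (nat \<Rightarrow> 'a) set \<Rightarrow> nat" where
  "nonzero_count n z M = (\<Sum>x\<in>M. card {j. j < n \<and> x j \<noteq> z})"

lemma nonzero_count_compress_less:
  assumes "finite M" "x \<in> M" "i < n" "x i \<noteq> z" "x(i := z) \<notin> M"
  shows "nonzero_count n z (compress i (x i) z M ` M) < nonzero_count n z M"
proof -
  have "nonzero_count n z (compress i (x i) z M ` M) = (\<Sum>y\<in>M. card {j. j < n \<and> compress i (x i) z M y j \<noteq> z})"
    unfolding nonzero_count_def by (simp add: sum.reindex[OF inj_on_compress])
  also have "\<dots> < nonzero_count n z M"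
    unfolding nonzero_count_def
  proof (rule sum_strict_mono_ex1)
    show "\<forall>y\<in>M. card {j. j < n \<and> compress i (x i) z M y j \<noteq> z} \<le> card {j. j < n \<and> y j \<noteq> z}"
      unfolding compress_def by (auto intro!: card_mono)
    have "{j. j < n \<and> compress i (x i) z M x j \<noteq> z} \<subset> {j. j < n \<and> x j \<noteq> z}"
      using assms unfolding compress_def by auto
    then show "\<exists>y\<in>M. card {j. j < n \<and> compress i (x i) z M y j \<noteq> z} < card {j. j < n \<and> y j \<noteq> z}"
      using assms(2) by (intro bexI[of _ x] psubset_card_mono) auto
  qed (use assms in auto)
  finally show ?thesis .
qed

lemma compress_in_PiE:
  assumes "x \<in> PiE {0..<n} (\<lambda>_. A)" "i < n" "z \<in> A"
  shows "compress i a z M x \<in> PiE {0..<n} (\<lambda>_. A)"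
proof -
  have "x(i := z) \<in> PiE {0..<n} (\<lambda>_. A)"
    using assms PiE_fun_upd[of z "\<lambda>_. A" i x "{0..<n}"] by (simp add: insert_absorb)
  then show ?thesis
    using assms(1) unfolding compress_def by simp
qed

lemma exists_down_closed:
  assumes M: "finite M" "M \<subseteq> PiE {0..<n} (\<lambda>_. A)" "t_agreeing n t M" and z: "z \<in> A"
  obtains M' where "M' \<subseteq> PiE {0..<n} (\<lambda>_. A)" "t_agreeing n t M'" "card M' = card M"
    "down_closed n z M'"
proof -
  define P where "P M' \<longleftrightarrow> finite M' \<and> M' \<subseteq> PiE {0..<n} (\<lambda>_. A) \<and> t_agreeing n t M' \<and> card M' = card M"
    for M' :: "(nat \<Rightarrow> 'a) set"
  obtain M' where "P M'" and least: "\<And>G. P G \<Longrightarrow> nonzero_count n z M' \<le> nonzero_count n z G"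
    using ex_has_least_nat[of P M "nonzero_count n z"] M unfolding P_def by blast
  have "down_closed n z M'"
    unfolding down_closed_def
  proof (intro ballI allI impI)
    fix x i assume x: "x \<in> M'" and i: "i < n"
    show "x(i := z) \<in> M'"
    proof (rule ccontr)
      assume out: "x(i := z) \<notin> M'"
      then have "x i \<noteq> z"
        using x by (metis fun_upd_triv)
      let ?G = "compress i (x i) z M' ` M'"
      have "?G \<subseteq> PiE {0..<n} (\<lambda>_. A)"
        using \<open>P M'\<close> compress_in_PiE[OF _ i z] unfolding P_def by blast
      then have "P ?G"
        using \<open>P M'\<close> t_agreeing_compress[of n t M' i] card_image[OF inj_on_compress[of i "x i" z M']] i
        unfolding P_def by auto
      moreover have "nonzero_count n z ?G < nonzero_count n z M'"
        using \<open>P M'\<close> x i \<open>x i \<noteq> z\<close> out unfolding P_def by (intro nonzero_count_compress_less) auto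
      ultimately show False
        using least by fastforce
    qed
  qed
  moreover have "M' \<subseteq> PiE {0..<n} (\<lambda>_. A)" "t_agreeing n t M'" "card M' = card M"
    using \<open>P M'\<close> unfolding P_def by auto
  ultimately show ?thesis
    using that by blast
qed

lemma down_closed_zero_on:
  assumes "down_closed n z M" "x \<in> M" "finite J" "J \<subseteq> {0..<n}"
  shows "(\<lambda>j. if j \<in> J then z else x j) \<in> M"
  using assms(3,4)
proof (induction J)
  case empty
  then show ?case
    using assms(2) by simp
next
  case (insert i J)
  then have "(\<lambda>j. if j \<in> J then z else x j)(i := z) \<in> M"
    using assms(1) unfolding down_closed_def by auto
  moreover have "(\<lambda>j. if j \<in> J then z else x j)(i := z) = (\<lambda>j. if j \<in> insert i J then z else x j)"
    by auto
  ultimately show ?case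
    by simp
qed

definition zero_set :: "nat \<Rightarrow> 'a \<Rightarrow> (nat \<Rightarrow> 'a) \<Rightarrow> nat set" where
  "zero_set n z x = {j. j < n \<and> x j = z}"

lemma card_zero_set_fiber:
  assumes "finite A" "z \<in> A" "Z \<subseteq> {0..<n}"
  shows "card {x \<in> PiE {0..<n} (\<lambda>_. A). zero_set n z x = Z} = (card A - 1) ^ (n - card Z)"
proof -
  define B where "B j = (if j \<in> Z then {z} else A - {z})" for j
  have "{x \<in> PiE {0..<n} (\<lambda>_. A). zero_set n z x = Z} = PiE {0..<n} B"
    using assms(2,3) unfolding zero_set_def B_def by (fastforce simp: PiE_iff split: if_splits)
  moreover have "card (PiE {0..<n} B) = (\<Prod>j\<in>{0..<n}. if j \<in> Z then 1 else card A - 1)"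
    using assms(1,2) unfolding B_def by (simp add: card_PiE if_distrib cong: if_cong)
  moreover have "card ({0..<n} \<inter> - Z) = n - card Z"
    using assms(3) by (simp add: Diff_eq[symmetric] card_Diff_subset finite_subset)
  ultimately show ?thesis
    by (simp add: prod.If_cases)
qed

text \<open>Zeroing \<open>y\<close> wherever \<open>x\<close> is non-zero keeps it in the family and leaves exactly the
  common zeros as agreements with \<open>x\<close>.\<close>

lemma t_intersecting_zero_sets:
  assumes "down_closed n z M" "t_agreeing n t M"
  shows "t_intersecting t (zero_set n z ` M)"
  unfolding t_intersecting_def
proof (intro ballI)
  fix X Y assume "X \<in> zero_set n z ` M" "Y \<in> zero_set n z ` M"
  then obtain x y where xy: "x \<in> M" "y \<in> M" "X = zero_set n z x" "Y = zero_set n z y"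
    by auto
  define y' where "y' = (\<lambda>j. if j \<in> {j. j < n \<and> x j \<noteq> z} then z else y j)"
  have "y' \<in> M"
    unfolding y'_def using assms(1) xy(2) by (rule down_closed_zero_on) auto
  moreover have "{j. j < n \<and> x j = y' j} = X \<inter> Y"
    unfolding xy y'_def zero_set_def by auto
  ultimately show "t \<le> card (X \<inter> Y)"
    using assms(2) xy(1) unfolding t_agreeing_def agreement_def by metis
qed

lemma card_le_biased_weight_zero_sets:
  assumes "finite A" "z \<in> A" "M \<subseteq> PiE {0..<n} (\<lambda>_. A)"
  shows "card M \<le> biased_weight (card A - 1) n (zero_set n z ` M)"
proof -
  let ?F = "zero_set n z ` M"
  have "?F \<subseteq> Pow {0..<n}"
    unfolding zero_set_def by auto
  then have "finite ?F"
    using finite_subset by blast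
  moreover have "finite {x \<in> PiE {0..<n} (\<lambda>_. A). zero_set n z x = Z}" for Z
    using assms(1) by (simp add: finite_PiE)
  moreover have "M \<subseteq> (\<Union>Z\<in>?F. {x \<in> PiE {0..<n} (\<lambda>_. A). zero_set n z x = Z})"
    using assms(3) by auto
  ultimately have "card M \<le> card (\<Union>Z\<in>?F. {x \<in> PiE {0..<n} (\<lambda>_. A). zero_set n z x = Z})"
    by (intro card_mono finite_UN_I)
  also have "\<dots> \<le> (\<Sum>Z\<in>?F. card {x \<in> PiE {0..<n} (\<lambda>_. A). zero_set n z x = Z})"
    using \<open>finite ?F\<close> by (rule card_UN_le)
  also have "\<dots> = biased_weight (card A - 1) n ?F"
    unfolding biased_weight_def using card_zero_set_fiber[OF assms(1,2)] \<open>?F \<subseteq> Pow {0..<n}\<close>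
    by (intro sum.cong) auto
  finally show ?thesis .
qed

lemma card_t_agreeing_le:
  assumes A: "finite A" "z \<in> A" "2 \<le> card A"
    and M: "M \<subseteq> PiE {0..<n} (\<lambda>_. A)" "t_agreeing n t M"
  shows "card M * (card A - 1) ^ t \<le> card A ^ n"
proof -
  have "finite M"
    using M(1) A(1) finite_subset[OF _ finite_PiE] by blast
  then obtain M' where M': "M' \<subseteq> PiE {0..<n} (\<lambda>_. A)" "t_agreeing n t M'" "card M' = card M"
      "down_closed n z M'"
    using exists_down_closed M A(2) by metis
  have "zero_set n z ` M' \<subseteq> Pow {0..<n}"
    unfolding zero_set_def by auto
  moreover have "t_intersecting t (zero_set n z ` M')"
    using M'(4,2) by (rule t_intersecting_zero_sets)
  ultimately have "biased_weight (card A - 1) n (zero_set n z ` M') * (card A - 1) ^ t \<le> card A ^ n"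
    using biased_weight_t_intersecting_le[of _ n t "card A - 1"] A(3) by simp
  then show ?thesis
    using card_le_biased_weight_zero_sets[OF A(1,2) M'(1)] M'(3) by (metis le_trans mult_le_mono1)
qed

section \<open>The inner product gadget\<close>

lemma ip_char_list:
  assumes "length u = b"
  shows "ip u (char_list b T) \<longleftrightarrow> odd (card {j. j < b \<and> u ! j \<and> j \<in> T})"
proof -
  have "map2 (\<and>) u (char_list b T) = map (\<lambda>j. u ! j \<and> j \<in> T) [0..<b]"
    using assms by (intro nth_equalityI) (auto simp: char_list_def)
  then show ?thesis
    unfolding ip_def by (simp add: filter_map comp_def length_filter_conv_card cong: conj_cong)
qed

lemma ip_char_list_empty: "length u = b \<Longrightarrow> \<not> ip u (char_list b {})"
  by (simp add: ip_char_list)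

lemma ip_char_list_singleton: "length u = b \<Longrightarrow> p < b \<Longrightarrow> ip u (char_list b {p}) = u ! p"
proof -
  assume "length u = b" "p < b"
  moreover have "{j. j < b \<and> u ! j \<and> j \<in> {p}} = (if u ! p then {p} else {})"
    using \<open>p < b\<close> by auto
  ultimately show ?thesis
    by (simp add: ip_char_list)
qed

lemma ip_char_list_doubleton:
  assumes "length u = b" "p < b" "r < b" "p \<noteq> r"
  shows "ip u (char_list b {p, r}) = (u ! p \<noteq> u ! r)"
proof -
  have pr: "{j. j < b \<and> u ! j \<and> j \<in> {p, r}} = (if u ! p then {p} else {}) \<union> (if u ! r then {r} else {})"
    using assms by auto
  show ?thesis
    unfolding ip_char_list[OF assms(1)] pr using assms(4) by (cases "u ! p"; cases "u ! r") simp_all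
qed

lemma ip_realizes_pair_of_separated:
  assumes u: "length u = b" "length u' = b" and r: "r < b" "u ! r" "\<not> u' ! r"
    and p: "p < b" "u' ! p"
  shows "\<exists>v. length v = b \<and> ip u v = \<alpha> \<and> ip u' v = \<beta>"
proof -
  have "p \<noteq> r"
    using p r by auto
  consider "\<not> \<beta>" "\<alpha>" | "\<not> \<beta>" "\<not> \<alpha>" | "\<beta>" "\<alpha> = u ! p" | "\<beta>" "\<alpha> \<noteq> u ! p"
    by blast
  then show ?thesis
  proof cases
    case 1
    then show ?thesis
      using u r by (intro exI[of _ "char_list b {r}"]) (simp add: ip_char_list_singleton)
  next
    case 2
    then show ?thesis
      using u by (intro exI[of _ "char_list b {}"]) (simp add: ip_char_list_empty)
  next
    case 3
    then show ?thesis
      using u p by (intro exI[of _ "char_list b {p}"]) (simp add: ip_char_list_singleton)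
  next
    case 4
    then show ?thesis
      using u p r \<open>p \<noteq> r\<close> by (intro exI[of _ "char_list b {p, r}"]) (auto simp: ip_char_list_doubleton)
  qed
qed

text \<open>Two distinct non-zero vectors over \<open>GF(2)\<close> are linearly independent, so the pair of inner
  products with them takes every value in \<open>{0, 1}\<^sup>2\<close>.\<close>

lemma ip_realizes_pair:
  assumes u: "length u = b" "True \<in> set u" and u': "length u' = b" "True \<in> set u'"
    and "u = u' \<Longrightarrow> \<alpha> = \<beta>"
  shows "\<exists>v. length v = b \<and> ip u v = \<alpha> \<and> ip u' v = \<beta>"
proof (cases "u = u'")
  case True
  obtain p where "p < b" "u ! p"
    using u by (metis in_set_conv_nth)
  then show ?thesis
    using u assms(5)[OF True] True
    by (intro exI[of _ "char_list b (if \<alpha> then {p} else {})"])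
       (simp add: ip_char_list_singleton ip_char_list_empty)
next
  case False
  then obtain r where r: "r < b" "u ! r \<noteq> u' ! r"
    using u u' by (metis nth_equalityI)
  show ?thesis
  proof (cases "u ! r")
    case True
    obtain p where "p < b" "u' ! p"
      using u' by (metis in_set_conv_nth)
    then show ?thesis
      using ip_realizes_pair_of_separated u u' r True by simp
  next
    case False
    obtain p where "p < b" "u ! p"
      using u by (metis in_set_conv_nth)
    then show ?thesis
      using ip_realizes_pair_of_separated[of u' b u r p \<beta> \<alpha>] u u' r False by auto
  qed
qed

section \<open>One-way protocols\<close>

lemma oneway_protocol_send_all: "oneway_protocol n b S f (n * b)"
proof -
  have concat_inj: "inj_on concat (blocks n b)"
  proof (rule inj_onI)
    fix x y assume "x \<in> blocks n b" "y \<in> blocks n b" "concat x = concat y"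
    then show "x = y"
      unfolding blocks_def
    proof (induction x arbitrary: y n)
      case (Cons u x)
      then obtain u' y' where "y = u' # y'"
        by (cases y) auto
      then show ?case
        using Cons by auto
    qed simp
  qed
  have "length (concat x) \<le> n * b" if "x \<in> blocks n b" for x
  proof -
    have "map length x = replicate n b"
      using that unfolding blocks_def by (intro nth_equalityI) auto
    then show ?thesis
      by (simp add: length_concat sum_list_replicate)
  qed
  then show ?thesis
    unfolding oneway_protocol_def
    by (intro exI[of _ concat] exI[of _ "\<lambda>w y. f (map2 ip (the_inv_into (blocks n b) concat w) y)"])
       (auto simp: the_inv_into_f_f[OF concat_inj] comp_dom_def)
qed

lemma D_cc_oneway_protocol: "oneway_protocol n b S f (D_cc_oneway n b S f)"
  unfolding D_cc_oneway_def using oneway_protocol_send_all by (rule LeastI)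

lemma D_dt_nonadaptive_le_card:
  assumes "A \<subseteq> {..<n}"
    and "\<And>z z'. z \<in> S \<Longrightarrow> z' \<in> S \<Longrightarrow> (\<forall>i\<in>A. z ! i = z' ! i) \<Longrightarrow> f z = f z'"
  shows "D_dt_nonadaptive n S f \<le> card A"
proof -
  have "finite A"
    using assms(1) finite_subset by blast
  have "nonadaptive_dt n S f (card A)"
    unfolding nonadaptive_dt_def
  proof (intro exI[of _ "sorted_list_of_set A"] conjI allI)
    show "length (sorted_list_of_set A) = card A" "\<forall>i\<in>set (sorted_list_of_set A). i < n"
      using assms(1) \<open>finite A\<close> by auto
    fix a :: "nat \<Rightarrow> bool"
    show "\<exists>c. \<forall>x\<in>S. (\<forall>i\<in>set (sorted_list_of_set A). x ! i = a i) \<longrightarrow> f x = c"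
    proof (cases "\<exists>z\<in>S. \<forall>i\<in>A. z ! i = a i")
      case True
      then obtain z where "z \<in> S" "\<forall>i\<in>A. z ! i = a i"
        by blast
      then show ?thesis
        using assms(2)[of z] \<open>finite A\<close> by (intro exI[of _ "f z"]) auto
    qed (use \<open>finite A\<close> in auto)
  qed
  then show ?thesis
    unfolding D_dt_nonadaptive_def by (rule Least_le)
qed

definition nonzero_blocks :: "nat \<Rightarrow> bool list set" where
  "nonzero_blocks b = {u. length u = b \<and> True \<in> set u}"

lemma map_upt_in_blocks: "v \<in> PiE {0..<n} (\<lambda>_. nonzero_blocks b) \<Longrightarrow> map v [0..<n] \<in> blocks n b"
  unfolding blocks_def nonzero_blocks_def by (auto simp: in_set_conv_nth)

lemma exists_blocks_map2_ip_eq: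
  assumes v: "v \<in> PiE {0..<n} (\<lambda>_. nonzero_blocks b)" "v' \<in> PiE {0..<n} (\<lambda>_. nonzero_blocks b)"
    and z: "length z = n" "length z' = n" "\<And>i. i < n \<Longrightarrow> v i = v' i \<Longrightarrow> z ! i = z' ! i"
  obtains Y where "Y \<in> blocks n b" "map2 ip (map v [0..<n]) Y = z" "map2 ip (map v' [0..<n]) Y = z'"
proof -
  define P where "P i y \<longleftrightarrow> length y = b \<and> ip (v i) y = z ! i \<and> ip (v' i) y = z' ! i" for i y
  have ex: "\<exists>y. P i y" if "i < n" for i
    unfolding P_def using v that z(3) unfolding nonzero_blocks_def
    by (intro ip_realizes_pair) auto
  define Y where "Y = map (\<lambda>i. SOME y. P i y) [0..<n]"
  have "length Y = n"
    unfolding Y_def by simp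
  have PY: "length (Y ! i) = b" "ip (v i) (Y ! i) = z ! i" "ip (v' i) (Y ! i) = z' ! i"
    if "i < n" for i
    using someI_ex[OF ex[OF that]] that unfolding Y_def P_def by auto
  then have "Y \<in> blocks n b"
    using \<open>length Y = n\<close> unfolding blocks_def by (auto simp: in_set_conv_nth)
  moreover have "map2 ip (map v [0..<n]) Y = z" "map2 ip (map v' [0..<n]) Y = z'"
    using PY \<open>length Y = n\<close> z(1,2) by (auto intro!: nth_equalityI)
  ultimately show ?thesis
    using that by blast
qed

text \<open>If Bob cannot tell Alice's inputs \<open>v\<close> and \<open>v'\<close> apart, then \<open>f\<close> is determined by the
  coordinates where they agree: for \<open>z, z' \<in> S\<close> equal there, Bob has an input on which the
  protocol must output both \<open>f z\<close> and \<open>f z'\<close>.\<close>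

lemma D_dt_nonadaptive_le_agreement:
  assumes S: "S \<subseteq> {x. length x = n}"
    and protocol: "\<forall>(x, y)\<in>comp_dom n b S. g (m x) y = f (map2 ip x y)"
    and v: "v \<in> PiE {0..<n} (\<lambda>_. nonzero_blocks b)" "v' \<in> PiE {0..<n} (\<lambda>_. nonzero_blocks b)"
    and same_message: "m (map v [0..<n]) = m (map v' [0..<n])"
  shows "D_dt_nonadaptive n S f \<le> agreement n v v'"
proof -
  define A where "A = {j. j < n \<and> v j = v' j}"
  have correct: "g (m x) y = f (map2 ip x y)" if "x \<in> blocks n b" "y \<in> blocks n b" "map2 ip x y \<in> S" for x y
  proof -
    have "(x, y) \<in> comp_dom n b S"
      using that unfolding comp_dom_def by simp
    then show ?thesis
      using bspec[OF protocol] by fastforce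
  qed
  have determined: "f z = f z'" if z: "z \<in> S" "z' \<in> S" "\<forall>i\<in>A. z ! i = z' ! i" for z z'
  proof -
    obtain Y where "Y \<in> blocks n b" "map2 ip (map v [0..<n]) Y = z" "map2 ip (map v' [0..<n]) Y = z'"
      using exists_blocks_map2_ip_eq[OF v] z S unfolding A_def by blast
    then show ?thesis
      using correct[OF map_upt_in_blocks[OF v(1)] \<open>Y \<in> blocks n b\<close>]
        correct[OF map_upt_in_blocks[OF v(2)] \<open>Y \<in> blocks n b\<close>] z(1,2) same_message
      by metis
  qed
  have "A \<subseteq> {..<n}"
    unfolding A_def by auto
  then have "D_dt_nonadaptive n S f \<le> card A"
    using determined by (rule D_dt_nonadaptive_le_card)
  then show ?thesis
    unfolding agreement_def A_def .
qed

lemma card_nonzero_blocks: "card (nonzero_blocks b) = 2 ^ b - 1"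
proof -
  have "True \<in> set u \<longleftrightarrow> u \<noteq> replicate (length u) False" for u
    by (metis (full_types) in_set_replicate replicate_length_same)
  then have "nonzero_blocks b = {u. length u = b} - {replicate b False}"
    unfolding nonzero_blocks_def by auto
  moreover have "card {u :: bool list. length u = b} = 2 ^ b"
    using card_lists_length_eq[of "UNIV :: bool set" b] by simp
  ultimately show ?thesis
    using finite_lists_length_eq_Collect[of b "\<lambda>_. True"] by simp
qed

lemma finite_nonzero_blocks: "finite (nonzero_blocks b)"
  unfolding nonzero_blocks_def by (rule finite_lists_length_eq_Collect)

lemma card_bool_lists_length_le: "card {w :: bool list. length w \<le> k} = 2 ^ Suc k - 1"
proof -
  have "card {w :: bool list. length w \<le> k} = (\<Sum>i\<le>k. 2 ^ i)"
    using card_lists_length_le[of "UNIV :: bool set" k] by simp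
  also have "\<dots> = 2 ^ Suc k - 1"
    using sum_power2[of "Suc k"] by (simp add: atLeast0LessThan lessThan_Suc_atMost)
  finally show ?thesis .
qed

lemma exists_large_message_class:
  fixes m :: "bool list list \<Rightarrow> bool list"
  assumes "\<forall>x\<in>blocks n b. length (m x) \<le> k"
  obtains w where "card (PiE {0..<n} (\<lambda>_. nonzero_blocks b))
    \<le> card {v \<in> PiE {0..<n} (\<lambda>_. nonzero_blocks b). m (map v [0..<n]) = w} * (2 ^ Suc k - 1)"
proof -
  define P where "P = PiE {0..<n} (\<lambda>_. nonzero_blocks b)"
  define message where "message v = m (map v [0..<n])" for v
  have "message \<in> P \<rightarrow> {w. length w \<le> k}"
    using assms map_upt_in_blocks unfolding P_def message_def by auto
  moreover have "finite P"
    unfolding P_def using finite_nonzero_blocks by (simp add: finite_PiE)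
  moreover have "finite {w :: bool list. length w \<le> k}"
    using finite_lists_length_le[of "UNIV :: bool set" k] by simp
  moreover have "[] \<in> {w :: bool list. length w \<le> k}"
    by simp
  ultimately obtain w where "card P \<le> card (message -` {w} \<inter> P) * card {w :: bool list. length w \<le> k}"
    using pigeonhole_card[of message P "{w. length w \<le> k}"] by blast
  moreover have "message -` {w} \<inter> P = {v \<in> P. m (map v [0..<n]) = w}"
    unfolding message_def by auto
  ultimately have "card P \<le> card {v \<in> P. m (map v [0..<n]) = w} * (2 ^ Suc k - 1)"
    by (simp only: card_bool_lists_length_le)
  then show ?thesis
    unfolding P_def by (rule that)
qed

lemma replicate_True_in_nonzero_blocks: "0 < b \<Longrightarrow> replicate b True \<in> nonzero_blocks b"
  unfolding nonzero_blocks_def by simp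

lemma two_le_card_nonzero_blocks:
  assumes "2 \<le> b"
  shows "2 \<le> card (nonzero_blocks b)"
proof -
  have "(2 :: nat) ^ 2 \<le> 2 ^ b"
    using assms by (rule power_increasing) simp
  then show ?thesis
    unfolding card_nonzero_blocks by simp
qed

lemma pow_D_dt_nonadaptive_less:
  assumes S: "S \<subseteq> {x. length x = n}" and b: "2 \<le> b"
  shows "(2 ^ b - 2) ^ D_dt_nonadaptive n S f < (2 :: nat) ^ Suc (D_cc_oneway n b S f)"
proof -
  define k where "k = D_cc_oneway n b S f"
  define d where "d = D_dt_nonadaptive n S f"
  define P where "P = PiE {0..<n} (\<lambda>_. nonzero_blocks b)"
  have "oneway_protocol n b S f k"
    unfolding k_def by (rule D_cc_oneway_protocol)
  then obtain m :: "bool list list \<Rightarrow> bool list" and g :: "bool list \<Rightarrow> bool list list \<Rightarrow> bool"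
    where m: "\<forall>x\<in>blocks n b. length (m x) \<le> k"
    and protocol: "\<forall>(x, y)\<in>comp_dom n b S. g (m x) y = f (map2 ip x y)"
    unfolding oneway_protocol_def by blast
  obtain w where "card P \<le> card {v \<in> P. m (map v [0..<n]) = w} * (2 ^ Suc k - 1)"
    using exists_large_message_class[OF m] unfolding P_def by blast
  define M where "M = {v \<in> P. m (map v [0..<n]) = w}"
  have large: "card P \<le> card M * (2 ^ Suc k - 1)"
    unfolding M_def by fact
  have "t_agreeing n d M"
    unfolding t_agreeing_def d_def M_def P_def
    using D_dt_nonadaptive_le_agreement[of S n b g m f, OF S protocol] by simp
  then have "card M * (2 ^ b - 2) ^ d \<le> card P"
    using card_t_agreeing_le[OF finite_nonzero_blocks replicate_True_in_nonzero_blocks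
        two_le_card_nonzero_blocks[OF b], of M n d] b
    unfolding P_def M_def by (simp add: card_PiE card_nonzero_blocks numeral_2_eq_2)
  moreover have "0 < card P"
    unfolding P_def using replicate_True_in_nonzero_blocks[of b] b finite_nonzero_blocks
    by (auto simp: card_PiE card_gt_0_iff)
  then have "0 < card M"
    using large by (cases "card M = 0") auto
  ultimately have "(2 ^ b - 2) ^ d \<le> (2 :: nat) ^ Suc k - 1"
    using large by (meson le_trans mult_le_cancel1)
  also have "\<dots> < 2 ^ Suc k"
    by simp
  finally show ?thesis
    unfolding d_def k_def .
qed

lemma mult_le_of_pow_less:
  fixes b d k :: nat
  assumes "2 \<le> b" "(2 ^ b - 2 :: nat) ^ d < 2 ^ Suc k"
  shows "b * d \<le> 2 * k"
proof -
  obtain c where c: "b = Suc c" "1 \<le> c"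
    using assms(1) by (cases b) auto
  then have "2 \<le> (2 :: nat) ^ c"
    using power_increasing[of 1 c "2 :: nat"] by simp
  then have "2 ^ (b - 1) \<le> (2 :: nat) ^ b - 2"
    using c by simp
  then have "2 ^ ((b - 1) * d) < (2 :: nat) ^ Suc k"
    using assms(2) power_mono[of "2 ^ (b - 1)" "2 ^ b - 2 :: nat" d] by (simp add: power_mult)
  then have "(b - 1) * d < Suc k"
    using power_strict_increasing_iff[of "2 :: nat" "(b - 1) * d" "Suc k"] by simp
  moreover have "b * d \<le> 2 * ((b - 1) * d)"
    using assms(1) by (cases b) auto
  ultimately show ?thesis
    by linarith
qed

theorem theorem1p2:
  shows "\<exists>c::real. c > 0 \<and>
    (\<forall>(n::nat) (S::bool list set) (f::bool list \<Rightarrow> bool) (b::nat).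
       S \<subseteq> {x. length x = n} \<longrightarrow> b \<ge> 2 \<longrightarrow>
       real (D_cc_oneway n b S f) \<ge> c * real b * real (D_dt_nonadaptive n S f))"
proof (intro exI[of _ "1 / 2"] conjI allI impI)
  fix n b :: nat and S :: "bool list set" and f :: "bool list \<Rightarrow> bool"
  assume "S \<subseteq> {x. length x = n}" "2 \<le> b"
  then have "b * D_dt_nonadaptive n S f \<le> 2 * D_cc_oneway n b S f"
    using mult_le_of_pow_less pow_D_dt_nonadaptive_less by blast
  then show "1 / 2 * real b * real (D_dt_nonadaptive n S f) \<le> real (D_cc_oneway n b S f)"
    by (simp add: of_nat_mult[symmetric] del: of_nat_mult)
qed simp

end
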